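(* For every positive integer $N$ there exists a positive integer $m$ such that there are at least $N$ pairwise nonequivalent graphical Hadamard matrices of order $4^m$; that is, the number of nonequivalent graphical Hadamard matrices of order $4^m$ is unbounded as $m\to\infty$.
   Context: A Hadamard matrix of order $n$ is an $n\times n$ matrix $H$ with entries $\pm1$ such that $HH^{\top}=nI$. It is graphical if it is symmetric with constant diagonal. Two Hadamard matrices are equivalent if one can be obtained from the other by permuting rows, permuting columns, and multiplying rows and columns by $-1$. *)

theory Defs
  imports "HOL-Combinatorics.Permutations"
begin

text \<open>An n x n matrix is represented as a function nat => nat => int; only the
entries with indices in {0..<n} are relevant.\<close>

definition hadamard :: "nat \<Rightarrow> (nat \<Rightarrow> nat \<Rightarrow> int) \<Rightarrow> bool" where
  "hadamard n H \<longleftrightarrow>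
     (\<forall>i<n. \<forall>j<n. H i j = 1 \<or> H i j = -1) \<and>
     (\<forall>i<n. \<forall>j<n. (\<Sum>k<n. H i k * H j k) = (if i = j then int n else 0))"

definition graphical :: "nat \<Rightarrow> (nat \<Rightarrow> nat \<Rightarrow> int) \<Rightarrow> bool" where
  "graphical n H \<longleftrightarrow>
     (\<forall>i<n. \<forall>j<n. H i j = H j i) \<and> (\<exists>d. \<forall>i<n. H i i = d)"

definition graphical_hadamard :: "nat \<Rightarrow> (nat \<Rightarrow> nat \<Rightarrow> int) \<Rightarrow> bool" where
  "graphical_hadamard n H \<longleftrightarrow> hadamard n H \<and> graphical n H"

definition hadamard_equiv :: "nat \<Rightarrow> (nat \<Rightarrow> nat \<Rightarrow> int) \<Rightarrow> (nat \<Rightarrow> nat \<Rightarrow> int) \<Rightarrow> bool" where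
  "hadamard_equiv n H K \<longleftrightarrow>
     (\<exists>p q r c. p permutes {..<n} \<and> q permutes {..<n} \<and>
        (\<forall>i<n. r i = 1 \<or> r i = (-1::int)) \<and> (\<forall>j<n. c j = 1 \<or> c j = (-1::int)) \<and>
        (\<forall>i<n. \<forall>j<n. K i j = r i * c j * H (p i) (q j)))"

end

theory Submission
  imports Defs "HOL.Rat"
begin

text \<open>
  For a $\pm1$ matrix $H$ of order $n$ put $S(a,b,c,d) = \sum_i H_{ia} H_{ib} H_{ic} H_{id}$ and
  $M_e(H) = \sum_{a,b,c,d} S(a,b,c,d)^e$. Permuting and negating rows and columns only permutes
  the $S$-values and changes their signs, so $M_2$ and $M_4$, and hence $\rho(H) = M_4/M_2$,
  are invariants of Hadamard equivalence; $S$ and therefore $M_e$ and $\rho$ are multiplicative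
  under Kronecker products. Since $|S| \le n$ we have $\rho(H) \le n^2$, strictly unless every
  $S$-value lies in $\{0, \pm n\}$. For $C = J - 2I$ of order 4 we get $\rho(C) = 16$, while the
  graphical Hadamard matrix $B$ of order 64 of a cubic Maiorana--McFarland bent function has an
  $S$-value 16, so $0 < \rho(B) < 64^2 = \rho(C)^3$. The graphical Hadamard matrices
  $C^{\otimes 3k} \otimes B^{\otimes (N-k)}$ of order $4^{3N}$ have
  $\rho = \rho(B)^N (\rho(C)^3/\rho(B))^k$, pairwise distinct for $k < N$.
\<close>

lemma sum_lessThan_mult_nat:
  fixes m n :: nat
  shows "(\<Sum>x<m * n. f x) = (\<Sum>a<m. \<Sum>b<n. f (a * n + b))"
proof -
  have "(\<Sum>b<n. f (a * n + b)) = sum f {a * n..<a * n + n}" for a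
    using sum.shift_bounds_nat_ivl[of f 0 "a * n" n] by (simp add: atLeast0LessThan add.commute)
  then show ?thesis by (simp add: sum.nat_group)
qed

type_synonym int_matrix = "nat \<Rightarrow> nat \<Rightarrow> int"

definition kron :: "nat \<Rightarrow> int_matrix \<Rightarrow> int_matrix \<Rightarrow> int_matrix" where
  "kron n A B i j = A (i div n) (j div n) * B (i mod n) (j mod n)"

lemma kron_hadamard:
  assumes A: "hadamard m A" and B: "hadamard n B"
  shows "hadamard (m * n) (kron n A B)"
  unfolding hadamard_def
proof (intro conjI allI impI)
  fix i j assume i: "i < m * n" and j: "j < m * n"
  then have "0 < n" by (cases n) auto
  then have ij: "i div n < m" "j div n < m" "i mod n < n" "j mod n < n"
    using i j by (simp_all add: less_mult_imp_div_less)
  show "kron n A B i j = 1 \<or> kron n A B i j = -1"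
  proof -
    have "A (i div n) (j div n) = 1 \<or> A (i div n) (j div n) = -1"
      and "B (i mod n) (j mod n) = 1 \<or> B (i mod n) (j mod n) = -1"
      using A B ij unfolding hadamard_def by blast+
    then show ?thesis unfolding kron_def by auto
  qed
  have "(\<Sum>k<m * n. kron n A B i k * kron n A B j k)
      = (\<Sum>a<m. A (i div n) a * A (j div n) a) * (\<Sum>b<n. B (i mod n) b * B (j mod n) b)"
    using \<open>0 < n\<close> by (simp add: sum_lessThan_mult_nat kron_def sum_product mult_ac)
  also have "\<dots> = (if i div n = j div n then int m else 0)
                  * (if i mod n = j mod n then int n else 0)"
    using A B ij unfolding hadamard_def by simp
  also have "\<dots> = (if i = j then int (m * n) else 0)"
  proof -
    have "i = j \<longleftrightarrow> i div n = j div n \<and> i mod n = j mod n"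
      by (metis div_mult_mod_eq)
    then show ?thesis by auto
  qed
  finally show "(\<Sum>k<m * n. kron n A B i k * kron n A B j k) = (if i = j then int (m * n) else 0)" .
qed

lemma kron_graphical:
  assumes A: "graphical m A" and B: "graphical n B"
  shows "graphical (m * n) (kron n A B)"
proof -
  obtain dA dB where dA: "\<forall>i<m. A i i = dA" and dB: "\<forall>i<n. B i i = dB"
    using A B unfolding graphical_def by blast
  have "i div n < m \<and> i mod n < n" if "i < m * n" for i
    using that by (cases n) (simp_all add: less_mult_imp_div_less)
  with A B dA dB show ?thesis
    unfolding graphical_def kron_def by (intro conjI exI[of _ "dA * dB"]) auto
qed

fun kron_power :: "nat \<Rightarrow> int_matrix \<Rightarrow> nat \<Rightarrow> int_matrix" where
  "kron_power n X 0 = (\<lambda>i j. 1)"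
| "kron_power n X (Suc k) = kron n (kron_power n X k) X"

lemma kron_power_hadamard:
  assumes "hadamard n X"
  shows "hadamard (n ^ k) (kron_power n X k)"
proof (induction k)
  case 0
  show ?case by (simp add: hadamard_def)
next
  case (Suc k)
  then show ?case using kron_hadamard[OF Suc assms] by (simp add: mult.commute)
qed

lemma kron_power_graphical:
  assumes "graphical n X"
  shows "graphical (n ^ k) (kron_power n X k)"
proof (induction k)
  case 0
  show ?case by (simp add: graphical_def)
next
  case (Suc k)
  then show ?case using kron_graphical[OF Suc assms] by (simp add: mult.commute)
qed

definition quad_sum :: "nat \<Rightarrow> int_matrix \<Rightarrow> nat \<Rightarrow> nat \<Rightarrow> nat \<Rightarrow> nat \<Rightarrow> int" where
  "quad_sum n H a b c d = (\<Sum>i<n. H i a * H i b * H i c * H i d)"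

definition profile_moment :: "nat \<Rightarrow> nat \<Rightarrow> int_matrix \<Rightarrow> int" where
  "profile_moment e n H = (\<Sum>a<n. \<Sum>b<n. \<Sum>c<n. \<Sum>d<n. quad_sum n H a b c d ^ e)"

definition moment_ratio :: "nat \<Rightarrow> int_matrix \<Rightarrow> rat" where
  "moment_ratio n H = of_int (profile_moment 4 n H) / of_int (profile_moment 2 n H)"

lemma quad_sum_kron:
  assumes "0 < n" "b1 < n" "b2 < n" "b3 < n" "b4 < n"
  shows "quad_sum (m * n) (kron n A B) (a1 * n + b1) (a2 * n + b2) (a3 * n + b3) (a4 * n + b4)
       = quad_sum m A a1 a2 a3 a4 * quad_sum n B b1 b2 b3 b4"
  using assms by (simp add: quad_sum_def sum_lessThan_mult_nat kron_def sum_product mult_ac)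

lemma profile_moment_kron:
  assumes "0 < n"
  shows "profile_moment e (m * n) (kron n A B) = profile_moment e m A * profile_moment e n B"
  using assms
  by (simp add: profile_moment_def sum_lessThan_mult_nat quad_sum_kron power_mult_distrib
                sum_product)

lemma moment_ratio_kron:
  "0 < n \<Longrightarrow> moment_ratio (m * n) (kron n A B) = moment_ratio m A * moment_ratio n B"
  by (simp add: moment_ratio_def profile_moment_kron)

lemma moment_ratio_kron_power:
  assumes "0 < n"
  shows "moment_ratio (n ^ k) (kron_power n X k) = moment_ratio n X ^ k"
proof (induction k)
  case 0
  show ?case by (simp add: moment_ratio_def profile_moment_def quad_sum_def)
next
  case (Suc k)
  then show ?case using moment_ratio_kron[OF assms, of "n ^ k"] by (simp add: mult.commute)
qed

lemma sum4_permute: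
  fixes q :: "nat \<Rightarrow> nat" and G :: "nat \<Rightarrow> nat \<Rightarrow> nat \<Rightarrow> nat \<Rightarrow> 'a::comm_monoid_add"
  assumes "q permutes {..<n}"
  shows "(\<Sum>a<n. \<Sum>b<n. \<Sum>c<n. \<Sum>d<n. G (q a) (q b) (q c) (q d))
       = (\<Sum>a<n. \<Sum>b<n. \<Sum>c<n. \<Sum>d<n. G a b c d)"
proof -
  have permute: "(\<Sum>x<n. g (q x)) = (\<Sum>x<n. g x)" for g :: "nat \<Rightarrow> 'a"
    using sum.permute[OF assms, of g] by (simp add: comp_def)
  show ?thesis
    by (simp only: permute[of "\<lambda>d. G _ _ _ d"] permute[of "\<lambda>c. \<Sum>d<n. G _ _ c d"]
                   permute[of "\<lambda>b. \<Sum>c<n. \<Sum>d<n. G _ b c d"]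
                   permute[of "\<lambda>a. \<Sum>b<n. \<Sum>c<n. \<Sum>d<n. G a b c d"])
qed

lemma quad_sum_signed_permuted:
  assumes p: "p permutes {..<n}"
    and r: "\<forall>i<n. r i = 1 \<or> r i = -1"
    and K: "\<forall>i<n. \<forall>j<n. K i j = r i * c j * H (p i) (q j)"
    and a: "a1 < n" "a2 < n" "a3 < n" "a4 < n"
  shows "quad_sum n K a1 a2 a3 a4
       = c a1 * c a2 * c a3 * c a4 * quad_sum n H (q a1) (q a2) (q a3) (q a4)"
proof -
  have "quad_sum n K a1 a2 a3 a4
      = (\<Sum>i<n. c a1 * c a2 * c a3 * c a4
                 * (H (p i) (q a1) * H (p i) (q a2) * H (p i) (q a3) * H (p i) (q a4)))"
    unfolding quad_sum_def
  proof (intro sum.cong refl)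
    fix i assume "i \<in> {..<n}"
    then have "r i ^ 4 = 1" and "i < n" using r by auto
    then show "K i a1 * K i a2 * K i a3 * K i a4
        = c a1 * c a2 * c a3 * c a4
          * (H (p i) (q a1) * H (p i) (q a2) * H (p i) (q a3) * H (p i) (q a4))"
      using K a by (simp add: algebra_simps eval_nat_numeral)
  qed
  also have "\<dots> = c a1 * c a2 * c a3 * c a4 * quad_sum n H (q a1) (q a2) (q a3) (q a4)"
    using sum.permute[OF p, of "\<lambda>i. H i (q a1) * H i (q a2) * H i (q a3) * H i (q a4)"]
    by (simp add: quad_sum_def sum_distrib_left comp_def)
  finally show ?thesis .
qed

lemma profile_moment_even_equiv:
  assumes "hadamard_equiv n H K"
  shows "profile_moment (2 * e) n K = profile_moment (2 * e) n H"
proof -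
  obtain p q r c where p: "p permutes {..<n}" and q: "q permutes {..<n}"
    and r: "\<forall>i<n. r i = 1 \<or> r i = (-1::int)" and c: "\<forall>j<n. c j = 1 \<or> c j = (-1::int)"
    and K: "\<forall>i<n. \<forall>j<n. K i j = r i * c j * H (p i) (q j)"
    using assms unfolding hadamard_equiv_def by blast
  have "profile_moment (2 * e) n K
      = (\<Sum>a<n. \<Sum>b<n. \<Sum>c<n. \<Sum>d<n. quad_sum n H (q a) (q b) (q c) (q d) ^ (2 * e))"
    unfolding profile_moment_def
  proof (intro sum.cong refl)
    fix a1 a2 a3 a4 assume "a1 \<in> {..<n}" "a2 \<in> {..<n}" "a3 \<in> {..<n}" "a4 \<in> {..<n}"
    then have a: "a1 < n" "a2 < n" "a3 < n" "a4 < n" by auto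
    have "c x ^ 2 = 1" if "x < n" for x
      using c that by auto
    then have "(c a1 * c a2 * c a3 * c a4) ^ 2 = 1"
      using a by (simp add: power_mult_distrib)
    then show "quad_sum n K a1 a2 a3 a4 ^ (2 * e) = quad_sum n H (q a1) (q a2) (q a3) (q a4) ^ (2 * e)"
      by (simp add: quad_sum_signed_permuted[where c = c and H = H and q = q, OF p r K a]
                    power_mult power_mult_distrib)
  qed
  also have "\<dots> = profile_moment (2 * e) n H"
    unfolding profile_moment_def by (rule sum4_permute[OF q])
  finally show ?thesis .
qed

lemma moment_ratio_equiv:
  "hadamard_equiv n H K \<Longrightarrow> moment_ratio n K = moment_ratio n H"
  using profile_moment_even_equiv[of n H K 1] profile_moment_even_equiv[of n H K 2]
  by (simp add: moment_ratio_def)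

lemma abs_quad_sum_le:
  assumes "hadamard n H" "a < n" "b < n" "c < n" "d < n"
  shows "\<bar>quad_sum n H a b c d\<bar> \<le> int n"
proof -
  have "\<bar>H i a * H i b * H i c * H i d\<bar> = 1" if "i < n" for i
  proof -
    have "\<bar>H i x\<bar> = 1" if "x < n" for x
      using assms(1) \<open>i < n\<close> that unfolding hadamard_def by fastforce
    then show ?thesis using assms by (simp add: abs_mult)
  qed
  then have "(\<Sum>i<n. \<bar>H i a * H i b * H i c * H i d\<bar>) = int n" by simp
  then show ?thesis unfolding quad_sum_def by (metis sum_abs)
qed

lemma sum4_strict_mono:
  fixes f g :: "nat \<Rightarrow> nat \<Rightarrow> nat \<Rightarrow> nat \<Rightarrow> int"
  assumes le: "\<And>a b c d. a < n \<Longrightarrow> b < n \<Longrightarrow> c < n \<Longrightarrow> d < n \<Longrightarrow> f a b c d \<le> g a b c d"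
    and w: "a0 < n" "b0 < n" "c0 < n" "d0 < n" and less: "f a0 b0 c0 d0 < g a0 b0 c0 d0"
  shows "(\<Sum>a<n. \<Sum>b<n. \<Sum>c<n. \<Sum>d<n. f a b c d)
       < (\<Sum>a<n. \<Sum>b<n. \<Sum>c<n. \<Sum>d<n. g a b c d)"
proof -
  have le3: "(\<Sum>d<n. f a b c d) \<le> (\<Sum>d<n. g a b c d)" if "a < n" "b < n" "c < n" for a b c
    by (rule sum_mono) (use le that in auto)
  have le2: "(\<Sum>c<n. \<Sum>d<n. f a b c d) \<le> (\<Sum>c<n. \<Sum>d<n. g a b c d)" if "a < n" "b < n" for a b
    by (rule sum_mono) (use le3 that in auto)
  have le1: "(\<Sum>b<n. \<Sum>c<n. \<Sum>d<n. f a b c d) \<le> (\<Sum>b<n. \<Sum>c<n. \<Sum>d<n. g a b c d)" if "a < n" for a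
    by (rule sum_mono) (use le2 that in auto)
  have "(\<Sum>d<n. f a0 b0 c0 d) < (\<Sum>d<n. g a0 b0 c0 d)"
    by (rule sum_strict_mono_ex1) (use le w less in auto)
  then have "(\<Sum>c<n. \<Sum>d<n. f a0 b0 c d) < (\<Sum>c<n. \<Sum>d<n. g a0 b0 c d)"
    by (intro sum_strict_mono_ex1) (use le3 w in auto)
  then have "(\<Sum>b<n. \<Sum>c<n. \<Sum>d<n. f a0 b c d) < (\<Sum>b<n. \<Sum>c<n. \<Sum>d<n. g a0 b c d)"
    by (intro sum_strict_mono_ex1) (use le2 w in auto)
  then show ?thesis
    by (intro sum_strict_mono_ex1) (use le1 w in auto)
qed

lemma moment_ratio_less:
  assumes H: "hadamard n H" and w: "a0 < n" "b0 < n" "c0 < n" "d0 < n"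
    and S: "quad_sum n H a0 b0 c0 d0 \<noteq> 0" "\<bar>quad_sum n H a0 b0 c0 d0\<bar> < int n"
  shows "0 < moment_ratio n H" "moment_ratio n H < of_nat n ^ 2"
proof -
  let ?S = "quad_sum n H"
  have le: "?S a b c d ^ 4 \<le> int n ^ 2 * ?S a b c d ^ 2" if "a < n" "b < n" "c < n" "d < n" for a b c d
  proof -
    have "?S a b c d ^ 2 \<le> int n ^ 2"
      using abs_quad_sum_le[OF H that] by (metis abs_ge_zero power2_abs power_mono)
    then have "?S a b c d ^ 2 * ?S a b c d ^ 2 \<le> int n ^ 2 * ?S a b c d ^ 2"
      by (rule mult_right_mono) simp
    then show ?thesis by (simp flip: power_add)
  qed
  have "?S a0 b0 c0 d0 ^ 2 < int n ^ 2"
    using S(2) by (metis abs_ge_zero power2_abs power_strict_mono zero_less_numeral)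
  moreover have "0 < ?S a0 b0 c0 d0 ^ 2" using S(1) by simp
  ultimately have "?S a0 b0 c0 d0 ^ 2 * ?S a0 b0 c0 d0 ^ 2 < int n ^ 2 * ?S a0 b0 c0 d0 ^ 2"
    by (rule mult_strict_right_mono)
  then have less: "?S a0 b0 c0 d0 ^ 4 < int n ^ 2 * ?S a0 b0 c0 d0 ^ 2"
    by (simp flip: power_add)
  have M4: "profile_moment 4 n H < int n ^ 2 * profile_moment 2 n H"
    using sum4_strict_mono[of n "\<lambda>a b c d. ?S a b c d ^ 4", OF le w less]
    by (simp add: profile_moment_def sum_distrib_left)
  have "0 < profile_moment 4 n H"
    using sum4_strict_mono[of n "\<lambda>_ _ _ _. 0", OF _ w] S(1) by (simp add: profile_moment_def)
  with M4 have "0 < int n ^ 2 * profile_moment 2 n H" by linarith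
  then have "0 < profile_moment 2 n H"
    by (simp add: zero_less_mult_iff)
  moreover have "rat_of_int (profile_moment 4 n H) < rat_of_int (int n ^ 2 * profile_moment 2 n H)"
    using M4 by (simp only: of_int_less_iff)
  ultimately show "0 < moment_ratio n H" "moment_ratio n H < of_nat n ^ 2"
    using \<open>0 < profile_moment 4 n H\<close> by (simp_all add: moment_ratio_def divide_less_eq)
qed

text \<open>Naturals are read as bit vectors over $\mathbb{F}_2$; the value is $(-1)^{a \cdot b}$.\<close>

fun walsh_char :: "nat \<Rightarrow> nat \<Rightarrow> int" where
  "walsh_char a b =
     (if a = 0 then 1 else (if odd a \<and> odd b then -1 else 1) * walsh_char (a div 2) (b div 2))"

declare walsh_char.simps [simp del]

lemma walsh_char_rec:
  "walsh_char a b = (if odd a \<and> odd b then -1 else 1) * walsh_char (a div 2) (b div 2)"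
  by (cases "a = 0") (simp_all add: walsh_char.simps[of a] walsh_char.simps[of 0])

lemma walsh_char_0_left [simp]: "walsh_char 0 b = 1"
  by (simp add: walsh_char.simps)

lemma walsh_char_0_right [simp]: "walsh_char a 0 = 1"
  by (induction a rule: nat_bit_induct)
     (simp_all add: walsh_char_rec[of "2 * _"] walsh_char_rec[of "Suc (2 * _)"])

lemma walsh_char_commute: "walsh_char a b = walsh_char b a"
proof (induction a arbitrary: b rule: less_induct)
  case (less a)
  show ?case
  proof (cases "a = 0")
    case False
    then have "a div 2 < a" by simp
    then show ?thesis using less walsh_char_rec[of a b] walsh_char_rec[of b a] by auto
  qed simp
qed

lemma walsh_char_cases: "walsh_char a b = 1 \<or> walsh_char a b = -1"
proof (induction a b rule: walsh_char.induct)
  case (1 a b)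
  then show ?case by (cases "a = 0") (auto simp: walsh_char_rec[of a b])
qed

lemma walsh_char_xor_right: "walsh_char a (xor b c) = walsh_char a b * walsh_char a c"
proof (induction a b arbitrary: c rule: walsh_char.induct)
  case (1 a b)
  show ?case
  proof (cases "a = 0")
    case False
    have "xor b c div 2 = xor (b div 2) (c div 2)"
      using xor_nat_rec[of b c] by simp
    then show ?thesis
      using 1[OF False, of "c div 2"]
      by (subst (1 2 3) walsh_char_rec) (auto simp: even_xor_iff)
  qed simp
qed

lemma xor_less_power_nat: "a < 2 ^ k \<Longrightarrow> b < 2 ^ k \<Longrightarrow> xor a b < (2 ^ k :: nat)"
  by (metis take_bit_nat_eq_self_iff take_bit_xor)

lemma sum_walsh_char:
  "a < 2 ^ k \<Longrightarrow> (\<Sum>b<2 ^ k. walsh_char a b) = (if a = 0 then 2 ^ k else 0)"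
proof (induction k arbitrary: a)
  case (Suc k)
  have "(\<Sum>b<2 ^ Suc k. walsh_char a b)
      = (\<Sum>b<2 ^ k. walsh_char a (2 * b) + walsh_char a (2 * b + 1))"
    using sum_lessThan_mult_nat[of "walsh_char a" "2 ^ k" 2] by (simp add: mult.commute numeral_2_eq_2)
  also have "\<dots> = (if odd a then 0 else 2 * (\<Sum>b<2 ^ k. walsh_char (a div 2) b))"
    by (simp add: walsh_char_rec[of a] sum_distrib_left flip: sum.distrib)
  also have "\<dots> = (if a = 0 then 2 ^ Suc k else 0)"
    using Suc by auto
  finally show ?case .
qed simp

lemma walsh_char_orthogonal:
  assumes "p < 2 ^ k" "q < 2 ^ k"
  shows "(\<Sum>a<2 ^ k. walsh_char p a * walsh_char q a) = (if p = q then 2 ^ k else 0)"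
proof -
  have "walsh_char p a * walsh_char q a = walsh_char (xor p q) a" for a
    by (simp add: walsh_char_commute[of _ a] walsh_char_xor_right)
  moreover have "xor p q = 0 \<longleftrightarrow> p = q"
    by (metis xor.assoc xor.left_neutral xor_self_eq)
  ultimately show ?thesis
    using sum_walsh_char[OF xor_less_power_nat[OF assms]] by simp
qed

lemma bij_betw_xor_lessThan_power:
  "s < 2 ^ k \<Longrightarrow> bij_betw (xor s) {..<2 ^ k} {..<(2 ^ k :: nat)}"
  by (rule bij_betw_byWitness[where f' = "xor s"])
     (auto simp: xor.assoc[symmetric] intro: xor_less_power_nat)

text \<open>
  Writing indices as $i = x + 2^k y$ with $x, y \in \mathbb{F}_2^k$, this is the matrix
  $f(i \oplus j)$ of the bent function $f(x, y) = (-1)^{\pi(x) \cdot y}$.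
\<close>

definition maiorana_mcfarland :: "nat \<Rightarrow> (nat \<Rightarrow> nat) \<Rightarrow> int_matrix" where
  "maiorana_mcfarland n \<pi> i j =
     walsh_char (\<pi> (xor (i mod n) (j mod n))) (xor (i div n) (j div n))"

lemma maiorana_mcfarland_graphical: "graphical (n * n) (maiorana_mcfarland n \<pi>)"
  unfolding graphical_def maiorana_mcfarland_def
  by (intro conjI exI[of _ 1]) (simp_all add: xor.commute)

lemma maiorana_mcfarland_rows_orthogonal:
  fixes \<pi> :: "nat \<Rightarrow> nat" and s t s' t' :: nat
  assumes \<pi>: "bij_betw \<pi> {..<2 ^ k} {..<2 ^ k}"
    and st: "s < 2 ^ k" "t < 2 ^ k" "s' < 2 ^ k" "t' < 2 ^ k"
  shows "(\<Sum>a<2 ^ k. \<Sum>b<2 ^ k. walsh_char (\<pi> (xor s b)) (xor t a)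
                                * walsh_char (\<pi> (xor s' b)) (xor t' a))
       = (if s = s' \<and> t = t' then 2 ^ k * 2 ^ k else 0)"
proof -
  let ?n = "2 ^ k :: nat"
  let ?W = walsh_char
  define p p' where "p b = \<pi> (xor s b)" and "p' b = \<pi> (xor s' b)" for b :: nat
  have p_less: "p b < ?n" "p' b < ?n" if "b < ?n" for b
    using bij_betwE[OF \<pi>] xor_less_power_nat st that by (auto simp: p_def p'_def)
  have p_eq_iff: "p b = p' b \<longleftrightarrow> s = s'" if "b < ?n" for b
  proof -
    have "p b = p' b \<longleftrightarrow> xor s b = xor s' b"
      using bij_betw_imp_inj_on[OF \<pi>] xor_less_power_nat st that
      by (auto simp: p_def p'_def dest: inj_onD)
    then show ?thesis by (metis xor.assoc xor.commute xor_self_eq xor.left_neutral)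
  qed
  have "(\<Sum>a<?n. \<Sum>b<?n. ?W (p b) (xor t a) * ?W (p' b) (xor t' a))
      = (\<Sum>b<?n. ?W (p b) t * ?W (p' b) t' * (\<Sum>a<?n. ?W (p b) a * ?W (p' b) a))"
    by (subst sum.swap) (simp add: walsh_char_xor_right sum_distrib_left mult_ac)
  also have "\<dots> = (\<Sum>b<?n. if s = s' then 2 ^ k * (?W t (p b) * ?W t' (p b)) else 0)"
  proof (intro sum.cong refl)
    fix b assume "b \<in> {..<?n}"
    then have b: "b < ?n" by simp
    have "(\<Sum>a<?n. ?W (p b) a * ?W (p' b) a) = (if s = s' then 2 ^ k else 0)"
      using walsh_char_orthogonal[OF p_less[OF b]] p_eq_iff[OF b] by simp
    moreover have "s = s' \<Longrightarrow> p' b = p b" by (simp add: p_def p'_def)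
    ultimately show "?W (p b) t * ?W (p' b) t' * (\<Sum>a<?n. ?W (p b) a * ?W (p' b) a)
        = (if s = s' then 2 ^ k * (?W t (p b) * ?W t' (p b)) else 0)"
      by (simp add: walsh_char_commute[of _ t] walsh_char_commute[of _ t'])
  qed
  also have "\<dots> = (if s = s' \<and> t = t' then 2 ^ k * 2 ^ k else 0)"
  proof (cases "s = s'")
    case True
    have "p = \<pi> \<circ> xor s" by (simp add: p_def fun_eq_iff)
    then have "bij_betw p {..<?n} {..<?n}"
      using bij_betw_trans[OF bij_betw_xor_lessThan_power[OF st(1)] \<pi>] by simp
    then have "(\<Sum>b<?n. ?W t (p b) * ?W t' (p b)) = (\<Sum>c<?n. ?W t c * ?W t' c)"
      by (rule sum.reindex_bij_betw)
    then show ?thesis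
      using True by (simp add: walsh_char_orthogonal st sum_distrib_left[symmetric])
  qed simp
  finally show ?thesis by (simp add: p_def p'_def)
qed

lemma maiorana_mcfarland_hadamard:
  assumes \<pi>: "bij_betw \<pi> {..<2 ^ k} {..<2 ^ k}"
  shows "hadamard (2 ^ k * 2 ^ k) (maiorana_mcfarland (2 ^ k) \<pi>)"
  unfolding hadamard_def
proof (intro conjI allI impI)
  let ?n = "2 ^ k :: nat" and ?B = "maiorana_mcfarland (2 ^ k) \<pi>"
  fix i j assume i: "i < ?n * ?n" and j: "j < ?n * ?n"
  show "?B i j = 1 \<or> ?B i j = -1"
    unfolding maiorana_mcfarland_def by (rule walsh_char_cases)
  have ij: "i mod ?n < ?n" "i div ?n < ?n" "j mod ?n < ?n" "j div ?n < ?n"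
    using i j by (simp_all add: less_mult_imp_div_less)
  have "i = j \<longleftrightarrow> i mod ?n = j mod ?n \<and> i div ?n = j div ?n"
    by (metis div_mult_mod_eq)
  then show "(\<Sum>z<?n * ?n. ?B i z * ?B j z) = (if i = j then int (?n * ?n) else 0)"
    using maiorana_mcfarland_rows_orthogonal[OF \<pi> ij]
    by (simp add: sum_lessThan_mult_nat maiorana_mcfarland_def)
qed

definition J_minus_2I :: int_matrix where
  "J_minus_2I i j = (if i = j then -1 else 1)"

lemma J_minus_2I_hadamard: "hadamard 4 J_minus_2I"
  by (simp add: hadamard_def J_minus_2I_def numeral_eq_Suc less_Suc_eq lessThan_Suc)

lemma J_minus_2I_graphical: "graphical 4 J_minus_2I"
  unfolding graphical_def J_minus_2I_def by (intro conjI exI[of _ "-1"]) auto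

lemma moment_ratio_J_minus_2I: "moment_ratio 4 J_minus_2I = 16"
  unfolding moment_ratio_def profile_moment_def quad_sum_def J_minus_2I_def by code_simp

text \<open>
  The permutation must be nonlinear on $\mathbb{F}_2^3$: for linear $\pi$ every $S$-value of the
  matrix lies in $\{0, \pm 64\}$.
\<close>

definition bent64 :: int_matrix where
  "bent64 = maiorana_mcfarland 8 ((!) [0, 1, 2, 4, 3, 6, 7, 5])"

lemma bent64_hadamard: "hadamard 64 bent64"
proof -
  have "bij_betw ((!) [0, 1, 2, 4, 3, 6, 7, 5]) {..<2 ^ 3} {..<2 ^ 3 :: nat}"
    by (rule bij_betw_nth) (auto simp: lessThan_nat_numeral)
  from maiorana_mcfarland_hadamard[OF this] show ?thesis by (simp add: bent64_def)
qed

lemma bent64_graphical: "graphical 64 bent64"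
  using maiorana_mcfarland_graphical[of 8] by (simp add: bent64_def)

lemma quad_sum_bent64: "quad_sum 64 bent64 0 1 2 4 = 16"
  unfolding quad_sum_def bent64_def maiorana_mcfarland_def by code_simp

lemma moment_ratio_bent64: "0 < moment_ratio 64 bent64" "moment_ratio 64 bent64 < 4096"
  using moment_ratio_less[OF bent64_hadamard, of 0 1 2 4] quad_sum_bent64 by simp_all

definition graphical_family :: "nat \<Rightarrow> nat \<Rightarrow> int_matrix" where
  "graphical_family N k =
     kron (64 ^ (N - k)) (kron_power 4 J_minus_2I (3 * k)) (kron_power 64 bent64 (N - k))"

lemma graphical_family_order: "k \<le> N \<Longrightarrow> 4 ^ (3 * k) * 64 ^ (N - k) = (4 ^ (3 * N) :: nat)"
  by (simp add: power_mult flip: power_add)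

lemma graphical_family_graphical_hadamard:
  assumes "k \<le> N"
  shows "graphical_hadamard (4 ^ (3 * N)) (graphical_family N k)"
proof -
  have "hadamard (4 ^ (3 * k) * 64 ^ (N - k)) (graphical_family N k)"
    unfolding graphical_family_def
    by (intro kron_hadamard kron_power_hadamard J_minus_2I_hadamard bent64_hadamard)
  moreover have "graphical (4 ^ (3 * k) * 64 ^ (N - k)) (graphical_family N k)"
    unfolding graphical_family_def
    by (intro kron_graphical kron_power_graphical J_minus_2I_graphical bent64_graphical)
  ultimately show ?thesis
    by (simp add: graphical_hadamard_def graphical_family_order[OF assms])
qed

lemma moment_ratio_graphical_family:
  assumes k: "k \<le> N"
  defines "\<rho> \<equiv> moment_ratio 64 bent64"
  shows "moment_ratio (4 ^ (3 * N)) (graphical_family N k) = \<rho> ^ N * (4096 / \<rho>) ^ k"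
proof -
  have "moment_ratio (4 ^ (3 * N)) (graphical_family N k) = 16 ^ (3 * k) * \<rho> ^ (N - k)"
    using moment_ratio_kron[of "64 ^ (N - k)" "4 ^ (3 * k)"] graphical_family_order[OF k]
    by (simp add: graphical_family_def moment_ratio_kron_power moment_ratio_J_minus_2I \<rho>_def)
  also have "\<dots> = 4096 ^ k * \<rho> ^ (N - k)"
    by (simp add: power_mult)
  also have "\<dots> = \<rho> ^ N * (4096 / \<rho>) ^ k"
    using moment_ratio_bent64(1) k
    by (simp add: \<rho>_def power_divide field_simps flip: power_add)
  finally show ?thesis .
qed

theorem corollary7p2:
  fixes N :: nat
  assumes "N > 0"
  shows "\<exists>m::nat. m > 0 \<and>
           (\<exists>Hs :: nat \<Rightarrow> nat \<Rightarrow> nat \<Rightarrow> int.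
              (\<forall>k<N. graphical_hadamard (4 ^ m) (Hs k)) \<and>
              (\<forall>k<N. \<forall>l<N. k \<noteq> l \<longrightarrow> \<not> hadamard_equiv (4 ^ m) (Hs k) (Hs l)))"
proof (intro exI[of _ "3 * N"] conjI exI[of _ "graphical_family N"] allI impI)
  show "0 < 3 * N" using assms by simp
next
  fix k assume "k < N"
  then show "graphical_hadamard (4 ^ (3 * N)) (graphical_family N k)"
    by (simp add: graphical_family_graphical_hadamard)
next
  fix k l assume kl: "k < N" "l < N" "k \<noteq> l"
  show "\<not> hadamard_equiv (4 ^ (3 * N)) (graphical_family N k) (graphical_family N l)"
  proof
    let ?q = "4096 / moment_ratio 64 bent64"
    assume "hadamard_equiv (4 ^ (3 * N)) (graphical_family N k) (graphical_family N l)"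
    then have "moment_ratio (4 ^ (3 * N)) (graphical_family N l)
             = moment_ratio (4 ^ (3 * N)) (graphical_family N k)"
      by (rule moment_ratio_equiv)
    then have "?q ^ l = ?q ^ k"
      using kl moment_ratio_bent64(1) by (simp add: moment_ratio_graphical_family)
    moreover have "1 < ?q" using moment_ratio_bent64 by simp
    ultimately show False using kl by simp
  qed
qed

end
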